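(* Let $G=(V,E)$ be a finite graph with at least one vertex and $k>0$ an integer. Then $G$ has a bramble of order at least $k$ if and only if $G$ has an $\mathcal F_k$-tangle of $S_k$, where $\mathcal F_k$ is the set of all stars $\sigma=\{(A_i,B_i):i=0,\dots,n\}\subseteq\vec S_k$ with $\bigl|\bigcap_{i=0}^nB_i\bigr|<k$.
   Context: An oriented vertex separation of $G$ is an ordered pair $(A,B)$ with $A\cup B=V$ and no edge between $A\setminus B$ and $B\setminus A$; $(A,B)\le(C,D)$ iff $A\subseteq C$ and $B\supseteq D$; $(A,B)^*=(B,A)$. $\vec S_k$ is the set of those with $|A\cap B|<k$, and $S_k$ the set of pairs $\{(A,B),(B,A)\}$ with $(A,B)\in\vec S_k$. A star is a nonempty set $\sigma$ with $\vec r\le\vec s^{\,*}$ for all distinct $\vec r,\vec s\in\sigma$. An orientation of $S_k$ contains exactly one of $(A,B),(B,A)$ for each such pair; it is consistent if there are no distinct $r,s\in S_k$ with orientations $\vec r<\vec s$ such that $\vec r^{\,*},\vec s\in O$; an $\mathcal F_k$-tangle is a consistent orientation of $S_k$ no subset of which lies in $\mathcal F_k$. Two vertex sets touch if they share a vertex or $G$ has an edge between them. A bramble is a set of vertex sets each inducing a connected subgraph, any two of which touch; its order is the minimum size of a vertex set meeting every element of the bramble. *)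

theory Defs
  imports Main
begin

definition is_graph :: "'a set \<Rightarrow> ('a \<Rightarrow> 'a \<Rightarrow> bool) \<Rightarrow> bool" where
  "is_graph V E \<longleftrightarrow> (\<forall>x y. E x y \<longrightarrow> x \<in> V \<and> y \<in> V \<and> E y x)"

definition oriented_sep :: "'a set \<Rightarrow> ('a \<Rightarrow> 'a \<Rightarrow> bool) \<Rightarrow> 'a set \<times> 'a set \<Rightarrow> bool" where
  "oriented_sep V E s \<longleftrightarrow> fst s \<union> snd s = V \<and>
     \<not> (\<exists>a \<in> fst s - snd s. \<exists>b \<in> snd s - fst s. E a b)"

definition sep_le :: "'a set \<times> 'a set \<Rightarrow> 'a set \<times> 'a set \<Rightarrow> bool" where
  "sep_le s t \<longleftrightarrow> fst s \<subseteq> fst t \<and> snd t \<subseteq> snd s"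

definition sep_inv :: "'a set \<times> 'a set \<Rightarrow> 'a set \<times> 'a set" where
  "sep_inv s = (snd s, fst s)"

definition vSk :: "'a set \<Rightarrow> ('a \<Rightarrow> 'a \<Rightarrow> bool) \<Rightarrow> nat \<Rightarrow> ('a set \<times> 'a set) set" where
  "vSk V E k = {s. oriented_sep V E s \<and> card (fst s \<inter> snd s) < k}"

definition is_star :: "('a set \<times> 'a set) set \<Rightarrow> bool" where
  "is_star \<sigma> \<longleftrightarrow> \<sigma> \<noteq> {} \<and> (\<forall>r \<in> \<sigma>. \<forall>s \<in> \<sigma>. r \<noteq> s \<longrightarrow> sep_le r (sep_inv s))"

definition Fk :: "'a set \<Rightarrow> ('a \<Rightarrow> 'a \<Rightarrow> bool) \<Rightarrow> nat \<Rightarrow> ('a set \<times> 'a set) set set" where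
  "Fk V E k = {\<sigma>. \<sigma> \<subseteq> vSk V E k \<and> finite \<sigma> \<and> is_star \<sigma> \<and> card (\<Inter> (snd ` \<sigma>)) < k}"

definition is_orientation :: "'a set \<Rightarrow> ('a \<Rightarrow> 'a \<Rightarrow> bool) \<Rightarrow> nat \<Rightarrow> ('a set \<times> 'a set) set \<Rightarrow> bool" where
  "is_orientation V E k Or \<longleftrightarrow> Or \<subseteq> vSk V E k \<and>
     (\<forall>s \<in> vSk V E k. (s \<in> Or \<or> sep_inv s \<in> Or) \<and>
        (s \<noteq> sep_inv s \<longrightarrow> \<not> (s \<in> Or \<and> sep_inv s \<in> Or)))"

definition is_consistent :: "'a set \<Rightarrow> ('a \<Rightarrow> 'a \<Rightarrow> bool) \<Rightarrow> nat \<Rightarrow> ('a set \<times> 'a set) set \<Rightarrow> bool" where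
  "is_consistent V E k Or \<longleftrightarrow>
     \<not> (\<exists>r \<in> vSk V E k. \<exists>s \<in> vSk V E k.
          {r, sep_inv r} \<noteq> {s, sep_inv s} \<and> sep_le r s \<and> r \<noteq> s \<and>
          sep_inv r \<in> Or \<and> s \<in> Or)"

definition is_Fk_tangle :: "'a set \<Rightarrow> ('a \<Rightarrow> 'a \<Rightarrow> bool) \<Rightarrow> nat \<Rightarrow> ('a set \<times> 'a set) set \<Rightarrow> bool" where
  "is_Fk_tangle V E k Or \<longleftrightarrow> is_orientation V E k Or \<and> is_consistent V E k Or \<and>
     (\<forall>\<sigma>. \<sigma> \<subseteq> Or \<longrightarrow> \<sigma> \<notin> Fk V E k)"

definition connected_in :: "('a \<Rightarrow> 'a \<Rightarrow> bool) \<Rightarrow> 'a set \<Rightarrow> bool" where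
  "connected_in E X \<longleftrightarrow> X \<noteq> {} \<and>
     (\<forall>x \<in> X. \<forall>y \<in> X. (\<lambda>a b. a \<in> X \<and> b \<in> X \<and> E a b)\<^sup>*\<^sup>* x y)"

definition touch :: "('a \<Rightarrow> 'a \<Rightarrow> bool) \<Rightarrow> 'a set \<Rightarrow> 'a set \<Rightarrow> bool" where
  "touch E X Y \<longleftrightarrow> X \<inter> Y \<noteq> {} \<or> (\<exists>x \<in> X. \<exists>y \<in> Y. E x y)"

definition is_bramble :: "'a set \<Rightarrow> ('a \<Rightarrow> 'a \<Rightarrow> bool) \<Rightarrow> 'a set set \<Rightarrow> bool" where
  "is_bramble V E \<B> \<longleftrightarrow> (\<forall>X \<in> \<B>. X \<subseteq> V \<and> connected_in E X) \<and>
     (\<forall>X \<in> \<B>. \<forall>Y \<in> \<B>. touch E X Y)"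

definition bramble_order :: "'a set \<Rightarrow> 'a set set \<Rightarrow> nat" where
  "bramble_order V \<B> = Min {card C | C. C \<subseteq> V \<and> (\<forall>X \<in> \<B>. C \<inter> X \<noteq> {})}"

end

theory Submission
  imports Defs
begin

(* Bramble to tangle: a bramble with no cover of fewer than k vertices orients every
   separation (A,B) of order < k towards the side containing a bramble set.  A bramble set
   avoiding the separator lies on one side because it is connected, and bramble sets on
   opposite sides cannot touch; this gives an orientation that is consistent and contains
   no star from \<F>_k.

   Tangle to bramble: take the connected sets C with |N(C)| < k whose separation
   (V - C, C \<union> N(C)) the tangle orients towards C.  Consistency makes them touch.  If some
   Z with |Z| < k met all of them, the tangle would orient every component of G - Z away
   from itself, and these orientations form a star with B-sides meeting in Z, i.e. a
   member of \<F>_k inside the tangle. *)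

lemma sep_inv_inv [simp]: "sep_inv (sep_inv s) = s"
  by (simp add: sep_inv_def)

lemma sep_inv_vSk:
  assumes "is_graph V E" and "s \<in> vSk V E k"
  shows "sep_inv s \<in> vSk V E k"
  using assms unfolding vSk_def oriented_sep_def sep_inv_def is_graph_def
  by (auto simp: Int_commute Un_commute)

definition no_small_cover :: "'a set \<Rightarrow> 'a set set \<Rightarrow> nat \<Rightarrow> bool" where
  "no_small_cover V \<B> k \<longleftrightarrow> (\<forall>C\<subseteq>V. card C < k \<longrightarrow> (\<exists>X\<in>\<B>. C \<inter> X = {}))"

(* The order of a family of nonempty vertex sets is at least k iff it has no cover of
   size < k; V itself is a cover, so the minimum in the definition is taken over a
   nonempty finite set. *)
lemma bramble_order_ge_iff:
  assumes "finite V" and "\<forall>X\<in>\<B>. X \<subseteq> V \<and> X \<noteq> {}"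
  shows "k \<le> bramble_order V \<B> \<longleftrightarrow> no_small_cover V \<B> k"
proof -
  let ?H = "{card C | C. C \<subseteq> V \<and> (\<forall>X \<in> \<B>. C \<inter> X \<noteq> {})}"
  have "\<forall>X\<in>\<B>. V \<inter> X \<noteq> {}" using assms(2) by blast
  then have "card V \<in> ?H" by blast
  moreover have "?H \<subseteq> card ` Pow V" by blast
  then have "finite ?H" using assms(1) by (meson finite_Pow_iff finite_imageI finite_subset)
  ultimately have "k \<le> bramble_order V \<B> \<longleftrightarrow> (\<forall>h\<in>?H. k \<le> h)"
    unfolding bramble_order_def by (metis (lifting) Min_ge_iff empty_iff)
  also have "\<dots> \<longleftrightarrow> (\<forall>C\<subseteq>V. (\<forall>X\<in>\<B>. C \<inter> X \<noteq> {}) \<longrightarrow> k \<le> card C)"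
    by blast
  also have "\<dots> \<longleftrightarrow> no_small_cover V \<B> k"
    unfolding no_small_cover_def by (meson not_le)
  finally show ?thesis .
qed

lemma connected_in_closed:
  assumes "connected_in E X" and "x \<in> X" and "x \<in> P"
    and "\<And>a b. a \<in> X \<inter> P \<Longrightarrow> b \<in> X \<Longrightarrow> E a b \<Longrightarrow> b \<in> P"
  shows "X \<subseteq> P"
proof
  fix y assume "y \<in> X"
  then have "(\<lambda>a b. a \<in> X \<and> b \<in> X \<and> E a b)\<^sup>*\<^sup>* x y"
    using assms(1,2) unfolding connected_in_def by blast
  then show "y \<in> P"
  proof (induction rule: rtranclp_induct)
    case base
    show ?case using assms(3) .
  next
    case (step b c)
    then show ?case using assms(4) by blast
  qed
qed

lemma connected_avoiding_separator:
  assumes "is_graph V E" and "oriented_sep V E (A, B)"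
    and "connected_in E X" and "X \<subseteq> V" and "X \<inter> (A \<inter> B) = {}"
  shows "X \<subseteq> A - B \<or> X \<subseteq> B - A"
proof -
  obtain x where x: "x \<in> X" using assms(3) unfolding connected_in_def by blast
  have sides: "X \<subseteq> (A - B) \<union> (B - A)"
    and no_edge: "\<And>a b. a \<in> A - B \<Longrightarrow> b \<in> B - A \<Longrightarrow> \<not> E a b"
    using assms(2,4,5) unfolding oriented_sep_def by auto
  have sym: "E a b \<Longrightarrow> E b a" for a b using assms(1) unfolding is_graph_def by blast
  show ?thesis
  proof (cases "x \<in> A - B")
    case True
    have "X \<subseteq> A - B"
      by (rule connected_in_closed[OF assms(3) x True]) (use sides no_edge in blast)
    then show ?thesis by blast
  next
    case False
    then have "x \<in> B - A" using sides x by blast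
    have "X \<subseteq> B - A"
      by (rule connected_in_closed[OF assms(3) x \<open>x \<in> B - A\<close>]) (use sides no_edge sym in blast)
    then show ?thesis by blast
  qed
qed

(* In a star every separator A \<inter> B lies in all B-sides: for distinct (A,B), (C,D) of
   the star we have A \<subseteq> D. *)
lemma star_separator_in_Inter:
  assumes "is_star \<sigma>" and "s \<in> \<sigma>"
  shows "fst s \<inter> snd s \<subseteq> \<Inter> (snd ` \<sigma>)"
proof (rule subsetI)
  fix y assume y: "y \<in> fst s \<inter> snd s"
  have "y \<in> snd t" if "t \<in> \<sigma>" for t
  proof (cases "s = t")
    case True
    then show ?thesis using y by simp
  next
    case False
    then have "sep_le s (sep_inv t)"
      using assms that unfolding is_star_def by simp
    then have "fst s \<subseteq> snd t" unfolding sep_le_def sep_inv_def by simp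
    then show ?thesis using y by blast
  qed
  then show "y \<in> \<Inter> (snd ` \<sigma>)" by blast
qed

definition tangle_of_bramble ::
  "'a set \<Rightarrow> ('a \<Rightarrow> 'a \<Rightarrow> bool) \<Rightarrow> nat \<Rightarrow> 'a set set \<Rightarrow> ('a set \<times> 'a set) set" where
  "tangle_of_bramble V E k \<B> = {s \<in> vSk V E k. \<exists>X\<in>\<B>. X \<subseteq> snd s - fst s}"

lemma bramble_not_on_both_sides:
  assumes "is_graph V E" and "is_bramble V E \<B>" and "oriented_sep V E (A, B)"
    and "X \<in> \<B>" and "X \<subseteq> A - B" and "Y \<in> \<B>" and "Y \<subseteq> B - A"
  shows False
proof -
  have "touch E X Y" using assms(2,4,6) unfolding is_bramble_def by blast
  moreover have "\<not> touch E X Y"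
    using assms(1,3,5,7) unfolding touch_def oriented_sep_def is_graph_def by fastforce
  ultimately show False by contradiction
qed

(* If the bramble has no cover of size < k, some bramble set avoids the separator of a
   given separation in vSk and hence lies strictly on one of its sides. *)
lemma bramble_meets_a_side:
  assumes "is_graph V E" and "is_bramble V E \<B>" and "no_small_cover V \<B> k"
    and "(A, B) \<in> vSk V E k"
  shows "\<exists>X\<in>\<B>. X \<subseteq> A - B \<or> X \<subseteq> B - A"
proof -
  have sep: "oriented_sep V E (A, B)" and small: "card (A \<inter> B) < k"
    using assms(4) unfolding vSk_def by auto
  have "A \<inter> B \<subseteq> V" using sep unfolding oriented_sep_def by auto
  then obtain X where X: "X \<in> \<B>" "A \<inter> B \<inter> X = {}"
    using assms(3) small unfolding no_small_cover_def by blast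
  have "connected_in E X" "X \<subseteq> V" using assms(2) X(1) unfolding is_bramble_def by auto
  then have "X \<subseteq> A - B \<or> X \<subseteq> B - A"
    using connected_avoiding_separator[OF assms(1) sep] X(2) by blast
  then show ?thesis using X(1) by blast
qed

lemma tangle_of_bramble_orientation:
  assumes "is_graph V E" and "is_bramble V E \<B>" and "no_small_cover V \<B> k"
  shows "is_orientation V E k (tangle_of_bramble V E k \<B>)"
  unfolding is_orientation_def
proof (intro conjI ballI impI)
  let ?Or = "tangle_of_bramble V E k \<B>"
  show "?Or \<subseteq> vSk V E k" unfolding tangle_of_bramble_def by blast
  fix s assume s: "s \<in> vSk V E k"
  obtain A B where AB: "s = (A, B)" by (cases s)
  have inv: "sep_inv s \<in> vSk V E k" using sep_inv_vSk[OF assms(1) s] .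
  obtain X where "X \<in> \<B>" "X \<subseteq> A - B \<or> X \<subseteq> B - A"
    using bramble_meets_a_side[OF assms, of A B] s unfolding AB by blast
  then show "s \<in> ?Or \<or> sep_inv s \<in> ?Or"
    using s inv unfolding AB tangle_of_bramble_def sep_inv_def by auto
  have sep: "oriented_sep V E (A, B)" using s unfolding AB vSk_def by simp
  show "\<not> (s \<in> ?Or \<and> sep_inv s \<in> ?Or)"
    using bramble_not_on_both_sides[OF assms(1,2) sep]
    unfolding AB tangle_of_bramble_def sep_inv_def by auto
qed

(* If (B,A) and (C,D) with (A,B) \<le> (C,D) both point to bramble sets X, Y, then
   X \<subseteq> A - B and Y \<subseteq> D - C \<subseteq> B - A, contradicting touching. *)
lemma tangle_of_bramble_consistent:
  assumes "is_graph V E" and "is_bramble V E \<B>"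
  shows "is_consistent V E k (tangle_of_bramble V E k \<B>)"
  unfolding is_consistent_def
proof (rule notI)
  assume "\<exists>r\<in>vSk V E k. \<exists>s\<in>vSk V E k. {r, sep_inv r} \<noteq> {s, sep_inv s} \<and> sep_le r s \<and>
    r \<noteq> s \<and> sep_inv r \<in> tangle_of_bramble V E k \<B> \<and> s \<in> tangle_of_bramble V E k \<B>"
  then obtain r s where r: "r \<in> vSk V E k" and le: "sep_le r s"
    and r_inv: "sep_inv r \<in> tangle_of_bramble V E k \<B>" and s: "s \<in> tangle_of_bramble V E k \<B>"
    by blast
  obtain A B where AB: "r = (A, B)" by (cases r)
  obtain C D where CD: "s = (C, D)" by (cases s)
  obtain X where X: "X \<in> \<B>" "X \<subseteq> A - B"
    using r_inv unfolding AB tangle_of_bramble_def sep_inv_def by auto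
  obtain Y where Y: "Y \<in> \<B>" "Y \<subseteq> D - C" using s unfolding CD tangle_of_bramble_def by auto
  have "Y \<subseteq> B - A" using Y(2) le unfolding AB CD sep_le_def by auto
  moreover have "oriented_sep V E (A, B)" using r unfolding AB vSk_def by simp
  ultimately show False using bramble_not_on_both_sides[OF assms] X Y(1) by blast
qed

(* A star \<sigma> in the orientation with |\<Inter> B_i| < k is impossible: some bramble set X
   avoids \<Inter> B_i, so some (A,B) \<in> \<sigma> has a vertex of X in A - B; X avoids A \<inter> B
   (which lies in \<Inter> B_i), so X \<subseteq> A - B, while (A,B) points to a bramble set in B - A. *)
lemma tangle_of_bramble_Fk_free:
  assumes "is_graph V E" and "is_bramble V E \<B>" and "no_small_cover V \<B> k"
    and "\<sigma> \<subseteq> tangle_of_bramble V E k \<B>"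
  shows "\<sigma> \<notin> Fk V E k"
proof
  assume "\<sigma> \<in> Fk V E k"
  then have \<sigma>: "\<sigma> \<subseteq> vSk V E k" "is_star \<sigma>" "card (\<Inter> (snd ` \<sigma>)) < k"
    unfolding Fk_def by auto
  let ?Z = "\<Inter> (snd ` \<sigma>)"
  have "\<sigma> \<noteq> {}" using \<sigma>(2) unfolding is_star_def by simp
  then have "?Z \<subseteq> V" using \<sigma>(1) unfolding vSk_def oriented_sep_def by blast
  then obtain X where X: "X \<in> \<B>" "?Z \<inter> X = {}"
    using assms(3) \<sigma>(3) unfolding no_small_cover_def by blast
  have X_conn: "connected_in E X" "X \<subseteq> V" using assms(2) X(1) unfolding is_bramble_def by auto
  then obtain x where x: "x \<in> X" unfolding connected_in_def by blast
  then have "x \<notin> ?Z" using X(2) by blast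
  then obtain A B where AB: "(A, B) \<in> \<sigma>" "x \<notin> B" by force
  have sep: "oriented_sep V E (A, B)" using AB(1) \<sigma>(1) unfolding vSk_def by auto
  have "A \<inter> B \<subseteq> ?Z" using star_separator_in_Inter[OF \<sigma>(2) AB(1)] by simp
  then have "X \<inter> (A \<inter> B) = {}" using X(2) by blast
  then have "X \<subseteq> A - B \<or> X \<subseteq> B - A"
    using connected_avoiding_separator[OF assms(1) sep X_conn] by blast
  then have "X \<subseteq> A - B" using x AB(2) by blast
  moreover obtain Y where "Y \<in> \<B>" "Y \<subseteq> B - A"
    using AB(1) assms(4) unfolding tangle_of_bramble_def by auto
  ultimately show False using bramble_not_on_both_sides[OF assms(1,2) sep X(1)] by blast
qed

lemma bramble_gives_tangle:
  assumes "is_graph V E" and "is_bramble V E \<B>" and "no_small_cover V \<B> k"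
  shows "is_Fk_tangle V E k (tangle_of_bramble V E k \<B>)"
  unfolding is_Fk_tangle_def
  using tangle_of_bramble_orientation[OF assms] tangle_of_bramble_consistent[OF assms(1,2)]
    tangle_of_bramble_Fk_free[OF assms] by blast

definition nbr :: "'a set \<Rightarrow> ('a \<Rightarrow> 'a \<Rightarrow> bool) \<Rightarrow> 'a set \<Rightarrow> 'a set" where
  "nbr V E C = {v \<in> V - C. \<exists>c\<in>C. E c v}"

definition comp_sep :: "'a set \<Rightarrow> ('a \<Rightarrow> 'a \<Rightarrow> bool) \<Rightarrow> 'a set \<Rightarrow> 'a set \<times> 'a set" where
  "comp_sep V E C = (V - C, C \<union> nbr V E C)"

lemma nbr_subset: "nbr V E C \<subseteq> V - C"
  unfolding nbr_def by blast

lemma comp_sep_vSk: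
  assumes "is_graph V E" and "C \<subseteq> V" and "card (nbr V E C) < k"
  shows "comp_sep V E C \<in> vSk V E k"
proof -
  have "fst (comp_sep V E C) \<inter> snd (comp_sep V E C) = nbr V E C"
    unfolding comp_sep_def using nbr_subset[of V E C] by auto
  moreover have "oriented_sep V E (comp_sep V E C)"
    using assms(1,2) unfolding oriented_sep_def comp_sep_def nbr_def is_graph_def by auto
  ultimately show ?thesis unfolding vSk_def using assms(3) by auto
qed

definition bramble_of_tangle ::
  "'a set \<Rightarrow> ('a \<Rightarrow> 'a \<Rightarrow> bool) \<Rightarrow> nat \<Rightarrow> ('a set \<times> 'a set) set \<Rightarrow> 'a set set" where
  "bramble_of_tangle V E k Or =
     {C. C \<subseteq> V \<and> connected_in E C \<and> card (nbr V E C) < k \<and> comp_sep V E C \<in> Or}"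

(* Two non-touching sets C, D of the bramble would give (D \<union> N(D), V - D) \<le> (V - C, C \<union> N(C))
   with the inverse of the first and the second in the tangle, violating consistency. *)
lemma bramble_of_tangle_touch:
  assumes "is_graph V E" and "is_Fk_tangle V E k Or"
    and "C \<in> bramble_of_tangle V E k Or" and "D \<in> bramble_of_tangle V E k Or"
  shows "touch E C D"
proof (rule ccontr)
  assume "\<not> touch E C D"
  then have disj: "C \<inter> D = {}" and no_edge: "\<And>c d. c \<in> C \<Longrightarrow> d \<in> D \<Longrightarrow> \<not> E c d"
    unfolding touch_def by auto
  have C: "C \<subseteq> V" "C \<noteq> {}" "card (nbr V E C) < k" "comp_sep V E C \<in> Or"
    using assms(3) unfolding bramble_of_tangle_def connected_in_def by auto
  have D: "D \<subseteq> V" "D \<noteq> {}" "card (nbr V E D) < k" "comp_sep V E D \<in> Or"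
    using assms(4) unfolding bramble_of_tangle_def connected_in_def by auto
  have ori: "is_orientation V E k Or" and con: "is_consistent V E k Or"
    using assms(2) unfolding is_Fk_tangle_def by auto
  let ?r = "sep_inv (comp_sep V E D)" and ?s = "comp_sep V E C"
  have D_vSk: "comp_sep V E D \<in> vSk V E k" using comp_sep_vSk[OF assms(1) D(1,3)] .
  have r_vSk: "?r \<in> vSk V E k" using sep_inv_vSk[OF assms(1) D_vSk] .
  have s_vSk: "?s \<in> vSk V E k" using comp_sep_vSk[OF assms(1) C(1,3)] .
  have "nbr V E C \<inter> D = {}" "nbr V E D \<inter> C = {}"
    using disj no_edge assms(1) unfolding nbr_def is_graph_def by blast+
  then have le: "sep_le ?r ?s"
    using C(1) D(1) disj nbr_subset[of V E C] nbr_subset[of V E D]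
    unfolding sep_le_def sep_inv_def comp_sep_def by auto
  have D_proper: "comp_sep V E D \<noteq> sep_inv (comp_sep V E D)"
    using D(1,2) unfolding comp_sep_def sep_inv_def by auto
  have r_ne_s: "?r \<noteq> ?s"
  proof
    assume "?r = ?s"
    then have "sep_inv (comp_sep V E D) \<in> Or" using C(4) by simp
    then show False using ori D_vSk D_proper D(4) unfolding is_orientation_def by blast
  qed
  have "{?r, sep_inv ?r} \<noteq> {?s, sep_inv ?s}"
  proof
    assume "{?r, sep_inv ?r} = {?s, sep_inv ?s}"
    then have "?r = sep_inv ?s" using r_ne_s by (auto simp: doubleton_eq_iff)
    then have "V - D = V - C" unfolding sep_inv_def comp_sep_def by simp
    then show False using C(1,2) D(1) disj by blast
  qed
  moreover have "sep_inv ?r \<in> Or" using D(4) by simp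
  ultimately show False
    using con r_vSk s_vSk le r_ne_s C(4) unfolding is_consistent_def by blast
qed

definition avoid_edge :: "'a set \<Rightarrow> ('a \<Rightarrow> 'a \<Rightarrow> bool) \<Rightarrow> 'a set \<Rightarrow> 'a \<Rightarrow> 'a \<Rightarrow> bool" where
  "avoid_edge V E Z a b \<longleftrightarrow> a \<in> V - Z \<and> b \<in> V - Z \<and> E a b"

definition component :: "'a set \<Rightarrow> ('a \<Rightarrow> 'a \<Rightarrow> bool) \<Rightarrow> 'a set \<Rightarrow> 'a \<Rightarrow> 'a set" where
  "component V E Z v = {u. (avoid_edge V E Z)\<^sup>*\<^sup>* v u}"

lemma component_self: "v \<in> component V E Z v"
  unfolding component_def by simp

lemma component_subset:
  assumes "v \<in> V - Z"
  shows "component V E Z v \<subseteq> V - Z"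
proof
  fix u assume "u \<in> component V E Z v"
  then have "(avoid_edge V E Z)\<^sup>*\<^sup>* v u" unfolding component_def by simp
  then show "u \<in> V - Z"
    by (induction rule: rtranclp_induct) (use assms in \<open>auto simp: avoid_edge_def\<close>)
qed

lemma component_eq:
  assumes "is_graph V E" and "u \<in> component V E Z v"
  shows "component V E Z u = component V E Z v"
proof -
  have "symp (avoid_edge V E Z)"
    using assms(1) unfolding symp_def avoid_edge_def is_graph_def by blast
  then have "equivp (avoid_edge V E Z)\<^sup>*\<^sup>*" by (rule equivp_rtranclp)
  moreover have "(avoid_edge V E Z)\<^sup>*\<^sup>* v u" using assms(2) unfolding component_def by simp
  ultimately have "(avoid_edge V E Z)\<^sup>*\<^sup>* v = (avoid_edge V E Z)\<^sup>*\<^sup>* u"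
    by (metis equivp_def)
  then show ?thesis unfolding component_def by simp
qed

lemma component_connected:
  assumes "is_graph V E"
  shows "connected_in E (component V E Z v)"
proof -
  let ?C = "component V E Z"
  have path: "(\<lambda>a b. a \<in> ?C x \<and> b \<in> ?C x \<and> E a b)\<^sup>*\<^sup>* x y" if "y \<in> ?C x" for x y
  proof -
    have "(avoid_edge V E Z)\<^sup>*\<^sup>* x y" using that unfolding component_def by simp
    then show ?thesis
    proof (induction rule: rtranclp_induct)
      case base
      show ?case by simp
    next
      case (step b c)
      have "b \<in> ?C x" "c \<in> ?C x"
        using step(1,2) unfolding component_def by (auto intro: rtranclp.rtrancl_into_rtrancl)
      moreover have "E b c" using step(2) unfolding avoid_edge_def by simp
      ultimately show ?case using step(3) by (simp add: rtranclp.rtrancl_into_rtrancl)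
    qed
  qed
  have "(\<lambda>a b. a \<in> ?C v \<and> b \<in> ?C v \<and> E a b)\<^sup>*\<^sup>* x y" if "x \<in> ?C v" "y \<in> ?C v" for x y
    using path[of y x] component_eq[OF assms that(1)] that(2) by simp
  then show ?thesis using component_self[of v] unfolding connected_in_def by blast
qed

lemma component_nbr:
  assumes "v \<in> V - Z"
  shows "nbr V E (component V E Z v) \<subseteq> Z"
proof
  fix u assume "u \<in> nbr V E (component V E Z v)"
  then obtain c where c: "c \<in> component V E Z v" "E c u" "u \<in> V" "u \<notin> component V E Z v"
    unfolding nbr_def by auto
  show "u \<in> Z"
  proof (rule ccontr)
    assume "u \<notin> Z"
    then have "avoid_edge V E Z c u"
      using c component_subset[OF assms] unfolding avoid_edge_def by auto
    then have "u \<in> component V E Z v"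
      using c(1) unfolding component_def by (auto intro: rtranclp.rtrancl_into_rtrancl)
    then show False using c(4) by simp
  qed
qed

lemma component_star:
  assumes "is_graph V E" and "Z \<noteq> V" and "Z \<subseteq> V"
  defines "\<sigma> \<equiv> (\<lambda>v. sep_inv (comp_sep V E (component V E Z v))) ` (V - Z)"
  shows "is_star \<sigma>" and "\<Inter> (snd ` \<sigma>) = Z"
proof -
  let ?C = "component V E Z"
  have snd_\<sigma>: "snd ` \<sigma> = (\<lambda>v. V - ?C v) ` (V - Z)"
    unfolding \<sigma>_def comp_sep_def sep_inv_def by (simp add: image_image)
  show "is_star \<sigma>"
    unfolding is_star_def
  proof (intro conjI ballI impI)
    show "\<sigma> \<noteq> {}" using assms(2,3) unfolding \<sigma>_def by auto
    fix r s assume "r \<in> \<sigma>" "s \<in> \<sigma>" "r \<noteq> s"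
    then obtain v w where v: "v \<in> V - Z" "r = sep_inv (comp_sep V E (?C v))"
      and w: "w \<in> V - Z" "s = sep_inv (comp_sep V E (?C w))"
      unfolding \<sigma>_def by blast
    have "?C v \<noteq> ?C w" using \<open>r \<noteq> s\<close> unfolding v(2) w(2) by auto
    have "?C v \<inter> ?C w = {}"
    proof (rule ccontr)
      assume "?C v \<inter> ?C w \<noteq> {}"
      then obtain x where "x \<in> ?C v" "x \<in> ?C w" by blast
      then have "?C v = ?C w" using component_eq[OF assms(1)] by metis
      then show False using \<open>?C v \<noteq> ?C w\<close> by contradiction
    qed
    then show "sep_le r (sep_inv s)"
      using component_subset[where E=E, OF v(1)] component_subset[where E=E, OF w(1)]
        component_nbr[where E=E, OF v(1)] component_nbr[where E=E, OF w(1)]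
        nbr_subset[of V E "?C v"] nbr_subset[of V E "?C w"]
      unfolding v(2) w(2) sep_le_def sep_inv_def comp_sep_def by auto
  qed
  have "(\<Inter>v\<in>V - Z. V - ?C v) = Z"
  proof (intro equalityI subsetI)
    fix u assume "u \<in> Z"
    show "u \<in> (\<Inter>v\<in>V - Z. V - ?C v)"
    proof (rule INT_I)
      fix v assume "v \<in> V - Z"
      then have "?C v \<subseteq> V - Z" by (rule component_subset)
      then show "u \<in> V - ?C v" using \<open>u \<in> Z\<close> assms(3) by blast
    qed
  next
    fix u assume u: "u \<in> (\<Inter>v\<in>V - Z. V - ?C v)"
    obtain v where "v \<in> V - Z" using assms(2,3) by blast
    have "u \<in> V" using INT_D[OF u \<open>v \<in> V - Z\<close>] by simp
    show "u \<in> Z"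
    proof (rule ccontr)
      assume "u \<notin> Z"
      then have "u \<in> V - ?C u" using INT_D[OF u] \<open>u \<in> V\<close> by simp
      then show False using component_self[of u] by simp
    qed
  qed
  then show "\<Inter> (snd ` \<sigma>) = Z" using snd_\<sigma> by simp
qed

(* A graph with fewer than k vertices has no \<F>_k-tangle: (V,V) lies in vSk, is its own
   inverse and forms a star {(V,V)} in \<F>_k. *)
lemma tangle_order_le_card:
  assumes "is_Fk_tangle V E k Or"
  shows "k \<le> card V"
proof (rule ccontr)
  assume "\<not> k \<le> card V"
  then have VV: "(V, V) \<in> vSk V E k" unfolding vSk_def oriented_sep_def by auto
  then have "(V, V) \<in> Or"
    using assms unfolding is_Fk_tangle_def is_orientation_def sep_inv_def by fastforce
  moreover have "{(V, V)} \<in> Fk V E k"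
    using VV \<open>\<not> k \<le> card V\<close> unfolding Fk_def is_star_def by auto
  ultimately show False using assms unfolding is_Fk_tangle_def by blast
qed

(* If some Z with |Z| < k met every member of the bramble, the tangle would orient each
   component C of G - Z away from C, so it would contain the star of component_star,
   which lies in \<F>_k. *)
lemma tangle_no_small_cover:
  assumes "finite V" and "is_graph V E" and "is_Fk_tangle V E k Or"
  shows "no_small_cover V (bramble_of_tangle V E k Or) k"
  unfolding no_small_cover_def
proof (intro allI impI)
  fix Z assume Z: "Z \<subseteq> V" "card Z < k"
  show "\<exists>C\<in>bramble_of_tangle V E k Or. Z \<inter> C = {}"
  proof (rule ccontr)
    assume no_comp: "\<not> ?thesis"
    let ?C = "component V E Z"
    define \<sigma> where "\<sigma> = (\<lambda>v. sep_inv (comp_sep V E (?C v))) ` (V - Z)"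
    have "Z \<noteq> V" using Z(2) tangle_order_le_card[OF assms(3)] by auto
    have small_nbr: "card (nbr V E (?C v)) < k" if "v \<in> V - Z" for v
    proof -
      have "nbr V E (?C v) \<subseteq> Z" using component_nbr[where E=E, OF that] .
      then have "card (nbr V E (?C v)) \<le> card Z"
        using card_mono finite_subset[OF Z(1) assms(1)] by blast
      then show ?thesis using Z(2) by simp
    qed
    have comp_in_vSk: "comp_sep V E (?C v) \<in> vSk V E k" if "v \<in> V - Z" for v
      using comp_sep_vSk[OF assms(2) _ small_nbr[OF that]] component_subset[where E=E, OF that]
      by blast
    have "comp_sep V E (?C v) \<notin> Or" if "v \<in> V - Z" for v
      using no_comp component_subset[where E=E, OF that] component_connected[OF assms(2)]
        small_nbr[OF that]
      unfolding bramble_of_tangle_def by blast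
    then have "\<sigma> \<subseteq> Or"
      using comp_in_vSk assms(3) unfolding \<sigma>_def is_Fk_tangle_def is_orientation_def by blast
    moreover have "\<sigma> \<in> Fk V E k"
      unfolding Fk_def
    proof (intro CollectI conjI)
      show "\<sigma> \<subseteq> vSk V E k" using comp_in_vSk sep_inv_vSk[OF assms(2)] unfolding \<sigma>_def by blast
      show "finite \<sigma>" using assms(1) unfolding \<sigma>_def by simp
      show "is_star \<sigma>" using component_star(1)[OF assms(2) \<open>Z \<noteq> V\<close> Z(1)] unfolding \<sigma>_def .
      show "card (\<Inter> (snd ` \<sigma>)) < k"
        using component_star(2)[OF assms(2) \<open>Z \<noteq> V\<close> Z(1)] Z(2) unfolding \<sigma>_def by simp
    qed
    ultimately show False using assms(3) unfolding is_Fk_tangle_def by blast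
  qed
qed

lemma tangle_gives_bramble:
  assumes "finite V" and "is_graph V E" and "is_Fk_tangle V E k Or"
  shows "is_bramble V E (bramble_of_tangle V E k Or)"
    and "no_small_cover V (bramble_of_tangle V E k Or) k"
proof -
  show "is_bramble V E (bramble_of_tangle V E k Or)"
    unfolding is_bramble_def
    using bramble_of_tangle_touch[OF assms(2,3)] unfolding bramble_of_tangle_def by blast
  show "no_small_cover V (bramble_of_tangle V E k Or) k"
    using tangle_no_small_cover[OF assms] .
qed

lemma bramble_members_nonempty:
  assumes "is_bramble V E \<B>"
  shows "\<forall>X\<in>\<B>. X \<subseteq> V \<and> X \<noteq> {}"
  using assms unfolding is_bramble_def connected_in_def by blast

(* The main theorem.  Both directions
   pass through no_small_cover, which expresses bramble order at least k. *)
theorem lemma5p8: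
  fixes V :: "'a set" and E :: "'a \<Rightarrow> 'a \<Rightarrow> bool" and k :: nat
  assumes "finite V" and "V \<noteq> {}" and "is_graph V E" and "k > 0"
  shows "(\<exists>\<B>. is_bramble V E \<B> \<and> bramble_order V \<B> \<ge> k) \<longleftrightarrow>
         (\<exists>Or. is_Fk_tangle V E k Or)"
proof
  assume "\<exists>\<B>. is_bramble V E \<B> \<and> bramble_order V \<B> \<ge> k"
  then obtain \<B> where bramble: "is_bramble V E \<B>" and order: "k \<le> bramble_order V \<B>"
    by blast
  have "no_small_cover V \<B> k"
    using order bramble_order_ge_iff[OF assms(1) bramble_members_nonempty[OF bramble]] by simp
  then show "\<exists>Or. is_Fk_tangle V E k Or"
    using bramble_gives_tangle[OF assms(3) bramble] by blast
next
  assume "\<exists>Or. is_Fk_tangle V E k Or"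
  then obtain Or where tangle: "is_Fk_tangle V E k Or" by blast
  let ?\<B> = "bramble_of_tangle V E k Or"
  have bramble: "is_bramble V E ?\<B>"
    using tangle_gives_bramble(1)[OF assms(1,3) tangle] .
  have "k \<le> bramble_order V ?\<B>"
    using tangle_gives_bramble(2)[OF assms(1,3) tangle]
      bramble_order_ge_iff[OF assms(1) bramble_members_nonempty[OF bramble]] by simp
  then show "\<exists>\<B>. is_bramble V E \<B> \<and> bramble_order V \<B> \<ge> k"
    using bramble by blast
qed

end
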